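(* Let $Q:P\to P$ be a linear operator with $\deg(Qp)=\deg p-1$ for every $p\in P$ (with the convention $\deg 0=-1$, so $Q$ annihilates constants). Write $Qx^n=\sum_{k=1}^{n}b_{n,k}x^{n-k}$ ($b_{n,k}\in\mathbf F$), so that $b_{n,1}\neq 0$ for all $n\ge1$, and assume $b_{1,1}=1$. Then there exist scalars $\{q_k\}_{k\ge2}\subset\mathbf F$ and an admissible sequence $\psi$ such that $$Q=\partial_\psi+\sum_{k\ge2}q_k\,\partial_\psi^{\,k}$$ (as operators on $P$; the sum is finite on each polynomial) if and only if there exists an admissible sequence $\psi$ such that $$b_{n,k}=\binom{n}{k}_{\psi}b_{k,k}\qquad\text{for all } n\ge k\ge 1 .$$ Moreover, if such $\{q_k\}_{k\ge2}$ and $\psi$ exist, they are unique.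
   Context: $\mathbf F$ is a field of characteristic zero and $P=\mathbf F[x]$. An admissible sequence is $\psi=(\psi_n)_{n\ge0}$ with $\psi_n\in\mathbf F$, $\psi_0=1$, $\psi_n\neq0$ for all $n$. Set $0_\psi=0$, $n_\psi=\psi_{n-1}/\psi_n$ for $n\ge1$, $n_\psi!=\psi_n^{-1}=n_\psi(n-1)_\psi\cdots1_\psi$ with $0_\psi!=1$, $n_\psi^{\underline k}=n_\psi(n-1)_\psi\cdots(n-k+1)_\psi$, and $\binom{n}{k}_\psi=n_\psi^{\underline k}/k_\psi!$. The $\psi$-derivative $\partial_\psi$ is the linear operator on $P$ with $\partial_\psi x^n=n_\psi x^{n-1}$ ($n\ge0$). *)

theory Defs
  imports "HOL-Computational_Algebra.Polynomial"
begin

definition admissible :: "(nat \<Rightarrow> 'a::field) \<Rightarrow> bool" where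
  "admissible \<psi> \<longleftrightarrow> \<psi> 0 = 1 \<and> (\<forall>n. \<psi> n \<noteq> 0)"

definition psi_num :: "(nat \<Rightarrow> 'a::field) \<Rightarrow> nat \<Rightarrow> 'a" where
  "psi_num \<psi> n = (if n = 0 then 0 else \<psi> (n - 1) / \<psi> n)"

definition psi_fact :: "(nat \<Rightarrow> 'a::field) \<Rightarrow> nat \<Rightarrow> 'a" where
  "psi_fact \<psi> n = inverse (\<psi> n)"

definition psi_falling :: "(nat \<Rightarrow> 'a::field) \<Rightarrow> nat \<Rightarrow> nat \<Rightarrow> 'a" where
  "psi_falling \<psi> n k = (\<Prod>i<k. psi_num \<psi> (n - i))"

definition psi_binom :: "(nat \<Rightarrow> 'a::field) \<Rightarrow> nat \<Rightarrow> nat \<Rightarrow> 'a" where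
  "psi_binom \<psi> n k = psi_falling \<psi> n k / psi_fact \<psi> k"

definition psi_deriv :: "(nat \<Rightarrow> 'a::field) \<Rightarrow> 'a poly \<Rightarrow> 'a poly" where
  "psi_deriv \<psi> p = (\<Sum>n\<le>degree p. monom (coeff p n * psi_num \<psi> n) (n - 1))"

definition deg :: "'a::zero poly \<Rightarrow> int" where
  "deg p = (if p = 0 then -1 else int (degree p))"

text \<open>Q = d_psi + sum_{k>=2} q_k d_psi^k on P (the sum is finite: terms with k > degree p vanish)\<close>
definition psi_series_rep :: "('a::field poly \<Rightarrow> 'a poly) \<Rightarrow> (nat \<Rightarrow> 'a) \<Rightarrow> (nat \<Rightarrow> 'a) \<Rightarrow> bool" where
  "psi_series_rep Q q \<psi> \<longleftrightarrow>
     (\<forall>p. Q p = psi_deriv \<psi> p + (\<Sum>k\<in>{2..degree p}. smult (q k) ((psi_deriv \<psi> ^^ k) p)))"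

end

theory Submission imports Defs begin

(* Both sides of the equivalence are statements about the matrix
   b(n,k) = coeff (Q x^n) (n-k) of the operator Q.
   (1) Since the k-th power of the psi-derivative maps x^n to n_psi^(k falling) x^(n-k),
       Q = d_psi + sum_{k>=2} q_k d_psi^k holds iff  b(n,k) = q_k * n_psi^(k falling)
       for all n >= k >= 1, where q_1 := 1 (lemmas psi_series_rep_matrix and
       matrix_psi_series_rep).  One direction only evaluates both sides on monomials;
       the other uses that a linear degree-lowering operator is determined by the
       lower-triangular part of its matrix.
   (2) Taking n = k gives q_k = b(k,k) * psi_k, which turns the matrix condition of (1)
       into the binomial condition b(n,k) = binom_psi(n,k) * b(k,k).  Conversely, the
       binomial condition is invariant under psi_n |-> psi_n / c^n, so psi may be
       normalised to psi_1 = 1, which matches b(1,1) = 1 and q_1 = 1.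
   (3) Uniqueness: the entries b(n,1) = n_psi determine psi, and b(k,k) = q_k / psi_k
       then determines q_k. *)

definition psi_binomial_type :: "('a::field poly \<Rightarrow> 'a poly) \<Rightarrow> (nat \<Rightarrow> 'a) \<Rightarrow> bool" where
  "psi_binomial_type Q \<psi> \<longleftrightarrow>
     (\<forall>n k. 1 \<le> k \<and> k \<le> n \<longrightarrow>
        coeff (Q (monom 1 n)) (n - k) = psi_binom \<psi> n k * coeff (Q (monom 1 k)) 0)"

lemma psi_falling_Suc: "psi_falling \<psi> n (Suc k) = psi_falling \<psi> n k * psi_num \<psi> (n - k)"
  by (simp add: psi_falling_def)

lemma psi_falling_1: "psi_falling \<psi> n (Suc 0) = psi_num \<psi> n"
  by (simp add: psi_falling_def)

lemma psi_falling_diag: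
  assumes "admissible \<psi>"
  shows "psi_falling \<psi> n n = inverse (\<psi> n)"
proof (induction n)
  case 0
  then show ?case using assms by (simp add: psi_falling_def admissible_def)
next
  case (Suc n)
  have "psi_falling \<psi> (Suc n) (Suc n) = psi_num \<psi> (Suc n) * psi_falling \<psi> n n"
    unfolding psi_falling_def prod.lessThan_Suc_shift by simp
  then show ?case using Suc assms by (simp add: psi_num_def admissible_def field_simps)
qed

lemma psi_binom_eq: "psi_binom \<psi> n k = psi_falling \<psi> n k * \<psi> k"
  by (simp add: psi_binom_def psi_fact_def divide_inverse)

text \<open>Rescaling \<open>\<psi>\<^sub>n\<close> to \<open>\<psi>\<^sub>n / c\<^sup>n\<close> multiplies every \<open>n_\<psi>\<close> by \<open>c\<close> and therefore leaves
  the \<open>\<psi>\<close>-binomial coefficients unchanged.\<close>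
lemma psi_binom_rescale:
  assumes "c \<noteq> 0"
  shows "psi_binom (\<lambda>n. \<psi> n / c ^ n) n k = psi_binom \<psi> n k"
proof -
  have num: "psi_num (\<lambda>n. \<psi> n / c ^ n) n = c * psi_num \<psi> n" for n
    using assms by (cases n) (simp_all add: psi_num_def field_simps)
  have "psi_falling (\<lambda>n. \<psi> n / c ^ n) n k = c ^ k * psi_falling \<psi> n k"
    by (simp add: psi_falling_def num prod.distrib)
  then show ?thesis
    using assms by (simp add: psi_binom_eq)
qed

lemma admissible_eqI:
  assumes "admissible \<psi>" "admissible \<psi>'" and num: "\<And>n. psi_num \<psi> n = psi_num \<psi>' n"
  shows "\<psi> = \<psi>'"
proof
  fix n show "\<psi> n = \<psi>' n"
  proof (induction n)
    case 0
    then show ?case using assms by (simp add: admissible_def)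
  next
    case (Suc n)
    have "\<psi> n / \<psi> (Suc n) = \<psi>' n / \<psi>' (Suc n)"
      using num[of "Suc n"] by (simp add: psi_num_def)
    then show ?case using Suc assms by (auto simp: admissible_def field_simps)
  qed
qed

lemma coeff_psi_deriv:
  "coeff (psi_deriv \<psi> p) m = coeff p (Suc m) * psi_num \<psi> (Suc m)"
proof -
  have "coeff (psi_deriv \<psi> p) m =
        (\<Sum>n\<le>degree p. if n = Suc m then coeff p n * psi_num \<psi> n else 0)"
    unfolding psi_deriv_def coeff_sum coeff_monom
    by (rule sum.cong) (auto simp: psi_num_def)
  then show ?thesis by (auto simp: coeff_eq_0)
qed

lemma coeff_psi_deriv_power:
  "coeff ((psi_deriv \<psi> ^^ k) p) m = coeff p (m + k) * psi_falling \<psi> (m + k) k"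
  by (induction k arbitrary: m) (simp_all add: psi_falling_def coeff_psi_deriv psi_falling_Suc)

text \<open>The coefficients of \<open>\<partial>\<^sub>\<psi> p + \<Sum>\<^sub>k\<^sub>\<ge>\<^sub>2 q\<^sub>k \<partial>\<^sub>\<psi>\<^sup>k p\<close>, written uniformly with \<open>q\<^sub>1 := 1\<close>.\<close>
lemma coeff_psi_series:
  "coeff (psi_deriv \<psi> p + (\<Sum>k\<in>{2..degree p}. smult (q k) ((psi_deriv \<psi> ^^ k) p))) m =
   (\<Sum>k\<in>{1..degree p}. (q(1 := 1)) k * coeff p (m + k) * psi_falling \<psi> (m + k) k)"
proof (cases "degree p = 0")
  case True
  then show ?thesis by (simp add: coeff_psi_deriv coeff_eq_0)
next
  case False
  then have split: "{1..degree p} = insert 1 {2..degree p}" by auto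
  have "(\<Sum>k\<in>{2..degree p}. q k * (coeff p (m + k) * psi_falling \<psi> (m + k) k)) =
        (\<Sum>k\<in>{2..degree p}. (q(1 := 1)) k * coeff p (m + k) * psi_falling \<psi> (m + k) k)"
    by (rule sum.cong) auto
  then show ?thesis
    unfolding split coeff_add coeff_sum coeff_smult coeff_psi_deriv_power coeff_psi_deriv
    by (simp add: psi_falling_1)
qed

lemma coeff_linear_operator:
  fixes Q :: "'a::field poly \<Rightarrow> 'a poly"
  assumes add: "\<And>p r. Q (p + r) = Q p + Q r"
    and hom: "\<And>c p. Q (smult c p) = smult c (Q p)"
  shows "coeff (Q p) m = (\<Sum>n\<le>degree p. coeff p n * coeff (Q (monom 1 n)) m)"
proof -
  have Q0: "Q 0 = 0" using hom[of 0 0] by simp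
  have Q_sum: "Q (\<Sum>i\<in>A. f i) = (\<Sum>i\<in>A. Q (f i))" for A and f :: "nat \<Rightarrow> 'a poly"
    by (induction A rule: infinite_finite_induct) (auto simp: Q0 add)
  have "Q p = Q (\<Sum>i\<le>degree p. smult (coeff p i) (monom 1 i))"
    by (simp add: smult_monom poly_as_sum_of_monoms)
  also have "\<dots> = (\<Sum>i\<le>degree p. smult (coeff p i) (Q (monom 1 i)))"
    by (simp add: Q_sum hom)
  finally show ?thesis by (simp add: coeff_sum)
qed

lemma coeff_lowering_monom:
  fixes Q :: "'a::field poly \<Rightarrow> 'a poly"
  assumes deg: "\<And>p. p \<noteq> 0 \<Longrightarrow> deg (Q p) = deg p - 1" and "n \<le> m"
  shows "coeff (Q (monom 1 n)) m = 0"
proof (cases "Q (monom 1 n) = 0")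
  case False
  then have "int (degree (Q (monom 1 n))) = int n - 1"
    using deg[of "monom 1 n"] by (simp add: deg_def degree_monom_eq)
  then show ?thesis using assms(2) by (intro coeff_eq_0) linarith
qed simp

text \<open>Hence the coefficients of \<open>Q p\<close> only involve the lower-triangular matrix entries
  \<open>b(m+k, k)\<close> with \<open>1 \<le> k \<le> deg p\<close>, the same shape as in the series formula above.\<close>
lemma coeff_lowering_operator:
  fixes Q :: "'a::field poly \<Rightarrow> 'a poly"
  assumes add: "\<And>p r. Q (p + r) = Q p + Q r"
    and hom: "\<And>c p. Q (smult c p) = smult c (Q p)"
    and deg: "\<And>p. p \<noteq> 0 \<Longrightarrow> deg (Q p) = deg p - 1"
  shows "coeff (Q p) m = (\<Sum>k\<in>{1..degree p}. coeff p (m + k) * coeff (Q (monom 1 (m + k))) m)"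
proof -
  define f where "f n = coeff p n * coeff (Q (monom 1 n)) m" for n
  have low: "f n = 0" if "n \<le> m" for n
    using that coeff_lowering_monom[OF deg] by (simp add: f_def)
  have high: "f n = 0" if "degree p < n" for n
    using that by (simp add: f_def coeff_eq_0)
  have "coeff (Q p) m = (\<Sum>n\<le>degree p. f n)"
    unfolding f_def by (rule coeff_linear_operator[OF add hom])
  also have "\<dots> = (\<Sum>n\<le>m + degree p. f n)"
    by (rule sum.mono_neutral_left) (auto intro: high)
  also have "\<dots> = (\<Sum>n\<in>{1 + m..degree p + m}. f n)"
    by (rule sum.mono_neutral_right) (auto intro: low)
  also have "\<dots> = (\<Sum>k\<in>{1..degree p}. f (m + k))"
    by (simp only: sum.atLeastAtMost_shift_bounds comp_def)
  finally show ?thesis by (simp add: f_def)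
qed

lemma coeff_psi_series_rep:
  assumes "psi_series_rep Q q \<psi>"
  shows "coeff (Q p) m =
         (\<Sum>k\<in>{1..degree p}. (q(1 := 1)) k * coeff p (m + k) * psi_falling \<psi> (m + k) k)"
proof -
  have "Q p = psi_deriv \<psi> p + (\<Sum>k\<in>{2..degree p}. smult (q k) ((psi_deriv \<psi> ^^ k) p))"
    using assms unfolding psi_series_rep_def by blast
  then show ?thesis by (simp only: coeff_psi_series)
qed

lemma psi_series_rep_matrix:
  fixes Q :: "'a::field poly \<Rightarrow> 'a poly"
  assumes rep: "psi_series_rep Q q \<psi>" and k: "1 \<le> k" "k \<le> n"
  shows "coeff (Q (monom 1 n)) (n - k) = (q(1 := 1)) k * psi_falling \<psi> n k"
proof -
  have "coeff (Q (monom 1 n)) (n - k) = (\<Sum>j\<in>{1..degree (monom 1 n :: 'a poly)}.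
          (q(1 := 1)) j * coeff (monom 1 n) (n - k + j) * psi_falling \<psi> (n - k + j) j)"
    by (rule coeff_psi_series_rep[OF rep])
  also have "\<dots> = (\<Sum>j\<in>{1..n}. if j = k then (q(1 := 1)) k * psi_falling \<psi> n k else 0)"
    by (rule sum.cong) (use k in \<open>auto simp: coeff_monom degree_monom_eq\<close>)
  finally show ?thesis using k by simp
qed

lemma matrix_psi_series_rep:
  fixes Q :: "'a::field poly \<Rightarrow> 'a poly"
  assumes add: "\<And>p r. Q (p + r) = Q p + Q r"
    and hom: "\<And>c p. Q (smult c p) = smult c (Q p)"
    and deg: "\<And>p. p \<noteq> 0 \<Longrightarrow> deg (Q p) = deg p - 1"
    and entries: "\<And>n k. 1 \<le> k \<Longrightarrow> k \<le> n \<Longrightarrow>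
                     coeff (Q (monom 1 n)) (n - k) = (q(1 := 1)) k * psi_falling \<psi> n k"
  shows "psi_series_rep Q q \<psi>"
  unfolding psi_series_rep_def
proof (intro allI poly_eqI)
  fix p m
  have entry: "coeff (Q (monom 1 (m + k))) m = (q(1 := 1)) k * psi_falling \<psi> (m + k) k"
    if "1 \<le> k" for k
    using entries[of k "m + k"] that by simp
  have "coeff (Q p) m = (\<Sum>k\<in>{1..degree p}. coeff p (m + k) * coeff (Q (monom 1 (m + k))) m)"
    by (rule coeff_lowering_operator[OF add hom deg])
  also have "\<dots> = (\<Sum>k\<in>{1..degree p}. (q(1 := 1)) k * coeff p (m + k) * psi_falling \<psi> (m + k) k)"
    by (rule sum.cong) (simp_all add: entry)
  also have "\<dots> = coeff (psi_deriv \<psi> p + (\<Sum>k\<in>{2..degree p}. smult (q k) ((psi_deriv \<psi> ^^ k) p))) m"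
    by (rule coeff_psi_series[symmetric])
  finally show "coeff (Q p) m = \<dots>" .
qed

text \<open>Step (2), forward: since \<open>b(k,k) = q\<^sub>k / \<psi>\<^sub>k\<close>, a series representation yields the
  binomial condition.\<close>
lemma psi_series_rep_binomial_type:
  assumes adm: "admissible \<psi>" and rep: "psi_series_rep Q q \<psi>"
  shows "psi_binomial_type Q \<psi>"
  unfolding psi_binomial_type_def
proof (intro allI impI)
  fix n k :: nat assume k: "1 \<le> k \<and> k \<le> n"
  have diag: "coeff (Q (monom 1 k)) 0 = (q(1 := 1)) k * inverse (\<psi> k)"
    using psi_series_rep_matrix[OF rep, of k k] k psi_falling_diag[OF adm] by simp
  have "coeff (Q (monom 1 n)) (n - k) = (psi_falling \<psi> n k * \<psi> k) * ((q(1 := 1)) k * inverse (\<psi> k))"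
    using psi_series_rep_matrix[OF rep, of k n] k adm by (simp add: admissible_def)
  then show "coeff (Q (monom 1 n)) (n - k) = psi_binom \<psi> n k * coeff (Q (monom 1 k)) 0"
    by (simp add: diag psi_binom_eq)
qed

text \<open>Step (2), backward: after normalising \<open>\<psi>\<^sub>1 = 1\<close>, the binomial condition yields a
  series representation with \<open>q\<^sub>k = b(k,k) \<psi>\<^sub>k\<close>.\<close>
lemma binomial_type_psi_series_rep:
  fixes Q :: "'a::field poly \<Rightarrow> 'a poly"
  assumes add: "\<And>p r. Q (p + r) = Q p + Q r"
    and hom: "\<And>c p. Q (smult c p) = smult c (Q p)"
    and deg: "\<And>p. p \<noteq> 0 \<Longrightarrow> deg (Q p) = deg p - 1"
    and b11: "coeff (Q (monom 1 1)) 0 = 1"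
    and adm: "admissible \<psi>" and bin: "psi_binomial_type Q \<psi>"
  shows "\<exists>q \<phi>. admissible \<phi> \<and> psi_series_rep Q q \<phi>"
proof -
  define \<phi> where "\<phi> n = \<psi> n / \<psi> 1 ^ n" for n
  define q where "q k = coeff (Q (monom 1 k)) 0 * \<phi> k" for k
  have nz: "\<psi> n \<noteq> 0" for n using adm by (simp add: admissible_def)
  have adm': "admissible \<phi>" using adm nz by (simp add: admissible_def \<phi>_def)
  have "q 1 = 1" using nz b11 by (simp add: q_def \<phi>_def)
  then have q1: "q(1 := 1) = q" by auto
  have binom: "psi_binom \<phi> n k = psi_binom \<psi> n k" for n k
    unfolding \<phi>_def by (rule psi_binom_rescale) (simp add: nz)
  have "psi_series_rep Q q \<phi>"
  proof (rule matrix_psi_series_rep[OF add hom deg])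
    fix n k :: nat assume "1 \<le> k" "k \<le> n"
    then have "coeff (Q (monom 1 n)) (n - k) = psi_binom \<phi> n k * coeff (Q (monom 1 k)) 0"
      using bin by (simp add: psi_binomial_type_def binom)
    then show "coeff (Q (monom 1 n)) (n - k) = (q(1 := 1)) k * psi_falling \<phi> n k"
      unfolding q1 by (simp add: q_def psi_binom_eq)
  qed
  with adm' show ?thesis by blast
qed

text \<open>Step (3): \<open>\<psi>\<close> and the \<open>q\<^sub>k\<close> (\<open>k \<ge> 2\<close>) are determined by the matrix of \<open>Q\<close>:
  \<open>b(n,1) = n\<^sub>\<psi>\<close> and \<open>b(k,k) = q\<^sub>k / \<psi>\<^sub>k\<close>.\<close>
lemma psi_series_rep_unique:
  assumes adm: "admissible \<psi>" "admissible \<psi>'"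
    and rep: "psi_series_rep Q q \<psi>" "psi_series_rep Q q' \<psi>'"
  shows "\<psi> = \<psi>' \<and> (\<forall>k\<ge>2. q k = q' k)"
proof -
  have "psi_num \<psi> n = psi_num \<psi>' n" for n
    using psi_series_rep_matrix[OF rep(1), of 1 n] psi_series_rep_matrix[OF rep(2), of 1 n]
    by (cases "n = 0") (simp_all add: psi_num_def psi_falling_1)
  then have same_psi: "\<psi> = \<psi>'" using admissible_eqI[OF adm] by blast
  have "q k = q' k" if "k \<ge> 2" for k
  proof -
    have "q k * inverse (\<psi> k) = q' k * inverse (\<psi> k)"
      using psi_series_rep_matrix[OF rep(1), of k k] psi_series_rep_matrix[OF rep(2), of k k]
        that same_psi psi_falling_diag[OF adm(1), of k] by simp
    then show ?thesis using adm(1) by (simp add: admissible_def)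
  qed
  with same_psi show ?thesis by blast
qed

theorem mainTheorem1:
  fixes Q :: "'a::field_char_0 poly \<Rightarrow> 'a poly"
  assumes add: "\<And>p r. Q (p + r) = Q p + Q r"
    and hom: "\<And>c p. Q (smult c p) = smult c (Q p)"
    and deg: "\<And>p. p \<noteq> 0 \<Longrightarrow> deg (Q p) = deg p - 1"
    and b11: "coeff (Q (monom 1 1)) 0 = 1"
  shows "((\<exists>q \<psi>. admissible \<psi> \<and> psi_series_rep Q q \<psi>) \<longleftrightarrow>
          (\<exists>\<psi>. admissible \<psi> \<and>
             (\<forall>n k. 1 \<le> k \<and> k \<le> n \<longrightarrow>
                coeff (Q (monom 1 n)) (n - k) = psi_binom \<psi> n k * coeff (Q (monom 1 k)) 0)))
       \<and> (\<forall>q \<psi> q' \<psi>'. admissible \<psi> \<and> psi_series_rep Q q \<psi> \<and>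
                        admissible \<psi>' \<and> psi_series_rep Q q' \<psi>' \<longrightarrow>
                        \<psi> = \<psi>' \<and> (\<forall>k\<ge>2. q k = q' k))"
  unfolding psi_binomial_type_def[symmetric]
proof (intro conjI[OF iffI] allI impI)
  assume "\<exists>q \<psi>. admissible \<psi> \<and> psi_series_rep Q q \<psi>"
  then show "\<exists>\<psi>. admissible \<psi> \<and> psi_binomial_type Q \<psi>"
    using psi_series_rep_binomial_type by blast
next
  assume "\<exists>\<psi>. admissible \<psi> \<and> psi_binomial_type Q \<psi>"
  then show "\<exists>q \<psi>. admissible \<psi> \<and> psi_series_rep Q q \<psi>"
    using binomial_type_psi_series_rep[OF add hom deg b11] by blast
next
  fix q \<psi> q' \<psi>'
  assume "admissible \<psi> \<and> psi_series_rep Q q \<psi> \<and> admissible \<psi>' \<and> psi_series_rep Q q' \<psi>'"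
  then show "\<psi> = \<psi>' \<and> (\<forall>k\<ge>2. q k = q' k)"
    using psi_series_rep_unique by blast
qed

end
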